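(* For every $N_0\in\mathbb N_{\ge1}$ and every $d\in\mathbb N_{\ge 1}$ there is a one-sided recommendation problem $T_d$ (in the exposure setting) with $d+1$ items and $N_0(d+1)$ users such that, for every $\theta\in\Theta$, letting $u^\theta$ be the maximizer of $W_\theta$ over $\mathcal U$, and for every choice of $u^{\mathrm{qua},\beta}\in\mathcal U^{\mathrm{qua}}_\beta$ ($\beta>0$): (i) there exists $\beta>0$ such that $u^\theta_{\mathcal N}\succ_L u^{\mathrm{qua},\beta}_{\mathcal N}$ and $u^\theta_{\mathcal I}\succ_L u^{\mathrm{qua},\beta}_{\mathcal I}$; (ii) the limit $L_d=\lim_{\beta\to\infty}\frac{\sum_{i\in\mathcal N}u^{\mathrm{qua},\beta}_i}{\sum_{i\in\mathcal N}u^\theta_i}$ exists, does not depend on the choice of the maximizers, and $L_d\to\frac56$ as $d\to\infty$.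
   Context: One-sided exposure setting: users $\mathcal N=\{1,\dots,|\mathcal N|\}$, items $\mathcal I=\{|\mathcal N|+1,\dots,n\}$, $n=|\mathcal N|+|\mathcal I|$; exposure weights $v\in\mathbb R^{|\mathcal I|}$ with $v_1\ge\dots\ge v_{|\mathcal I|}\ge0$; values $\mu_{ij}\ge0$ for $i\in\mathcal N$, $j\in\mathcal I$. A ranking tensor $P=(P_{ijk})_{i\in\mathcal N,j\in\mathcal I,k\in[|\mathcal I|]}$ is such that each $P_i=(P_{ijk})_{j,k}$ is doubly stochastic; $\mathcal P$ is the set of ranking tensors, $P_{ij}v=\sum_kP_{ijk}v_k$. User utility $u_i(P)=\sum_{j\in\mathcal I}\mu_{ij}P_{ij}v$ ($i\in\mathcal N$); item utility (exposure) $u_j(P)=\sum_{i\in\mathcal N}P_{ij}v$ ($j\in\mathcal I$). $u(P)=(u_i(P))_{i\in[n]}$, $\mathcal U=\{u(P):P\in\mathcal P\}$, $u_{\mathcal N}=(u_i)_{i\in\mathcal N}$, $u_{\mathcal I}=(u_j)_{j\in\mathcal I}$. A recommendation problem is specified by $\mathcal N,\mathcal I,\mu,v$. Lorenz dominance: for $x\in\mathbb R^m$ with increasingly sorted entries $x_{(1)}\le\dots\le x_{(m)}$, let $\bar x_k=\sum_{l\le k}x_{(l)}$; $x\succeq_L y$ iff $\bar x_k\ge\bar y_k$ for all $k$; $x\succ_L y$ iff $x\succeq_L y$ and $\bar x_k>\bar y_k$ for some $k$. Welfare: $\psi(x,\alpha)=x^\alpha$ ($\alpha>0$), $\log x$ ($\alpha=0$),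 $-x^\alpha$ ($\alpha<0$), with $\psi(0,\alpha)=-\infty$ for $\alpha\le0$; $W_\theta(u)=(1-\lambda)\sum_{i\in\mathcal N}\psi(u_i,\alpha_1)+\lambda\sum_{j\in\mathcal I}\psi(u_j,\alpha_2)$ for $\theta=(\lambda,\alpha_1,\alpha_2)$; $\Theta=(0,1)\times(-\infty,1)^2$. Quality-weighted exposure: $q_j=\sum_{i\in\mathcal N}\mu_{ij}$, $Q=\sum_{j\in\mathcal I}q_j$, $E=|\mathcal N|\,\|v\|_1$, $D^{\mathrm{qua}}(u)=\frac1n\sum_{j\in\mathcal I}\big(u_j-\frac{q_jE}{Q}\big)^2$, $F^{\mathrm{qua}}_\beta(u)=\sum_{i\in\mathcal N}u_i-\beta\sqrt{D^{\mathrm{qua}}(u)}$, and $\mathcal U^{\mathrm{qua}}_\beta=\arg\max_{u\in\mathcal U}F^{\mathrm{qua}}_\beta(u)$. *)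

theory Defs
  imports Complex_Main "HOL-Library.Extended_Real"
begin

text \<open>A one-sided recommendation problem: users are indexed by 0..<nusers,
  items by 0..<nitems (the paper's items |N|+1..n are re-indexed from 0);
  mu i j is the value of item j for user i, vexp k the exposure weight of rank k.\<close>

record rec_problem =
  nusers :: nat
  nitems :: nat
  mu :: "nat \<Rightarrow> nat \<Rightarrow> real"
  vexp :: "nat \<Rightarrow> real"

definition valid_problem :: "rec_problem \<Rightarrow> bool" where
  "valid_problem T \<longleftrightarrow>
     (\<forall>i j. i < nusers T \<longrightarrow> j < nitems T \<longrightarrow> 0 \<le> mu T i j) \<and>
     (\<forall>k. k < nitems T \<longrightarrow> 0 \<le> vexp T k) \<and>
     (\<forall>k l. k \<le> l \<longrightarrow> l < nitems T \<longrightarrow> vexp T l \<le> vexp T k)"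

definition doubly_stochastic :: "nat \<Rightarrow> (nat \<Rightarrow> nat \<Rightarrow> real) \<Rightarrow> bool" where
  "doubly_stochastic p A \<longleftrightarrow>
     (\<forall>j k. j < p \<longrightarrow> k < p \<longrightarrow> 0 \<le> A j k) \<and>
     (\<forall>j. j < p \<longrightarrow> (\<Sum>k<p. A j k) = 1) \<and>
     (\<forall>k. k < p \<longrightarrow> (\<Sum>j<p. A j k) = 1)"

definition ranking_tensor :: "rec_problem \<Rightarrow> (nat \<Rightarrow> nat \<Rightarrow> nat \<Rightarrow> real) \<Rightarrow> bool" where
  "ranking_tensor T P \<longleftrightarrow> (\<forall>i. i < nusers T \<longrightarrow> doubly_stochastic (nitems T) (P i))"

definition expo :: "rec_problem \<Rightarrow> (nat \<Rightarrow> nat \<Rightarrow> nat \<Rightarrow> real) \<Rightarrow> nat \<Rightarrow> nat \<Rightarrow> real" where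
  "expo T P i j = (\<Sum>k<nitems T. P i j k * vexp T k)"

definition user_util :: "rec_problem \<Rightarrow> (nat \<Rightarrow> nat \<Rightarrow> nat \<Rightarrow> real) \<Rightarrow> nat \<Rightarrow> real" where
  "user_util T P = (\<lambda>i. if i < nusers T then (\<Sum>j<nitems T. mu T i j * expo T P i j) else 0)"

definition item_util :: "rec_problem \<Rightarrow> (nat \<Rightarrow> nat \<Rightarrow> nat \<Rightarrow> real) \<Rightarrow> nat \<Rightarrow> real" where
  "item_util T P = (\<lambda>j. if j < nitems T then (\<Sum>i<nusers T. expo T P i j) else 0)"

text \<open>A utility profile u is a pair (u_N, u_I) of the user and item utilities.\<close>
type_synonym utility = "(nat \<Rightarrow> real) \<times> (nat \<Rightarrow> real)"

definition utilities :: "rec_problem \<Rightarrow> utility set" where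
  "utilities T = {(user_util T P, item_util T P) | P. ranking_tensor T P}"

definition psi :: "real \<Rightarrow> real \<Rightarrow> ereal" where
  "psi x a = (if a > 0 then ereal (x powr a)
              else if x \<le> 0 then -\<infinity>
              else if a = 0 then ereal (ln x)
              else ereal (- (x powr a)))"

definition welfare :: "rec_problem \<Rightarrow> real \<times> real \<times> real \<Rightarrow> utility \<Rightarrow> ereal" where
  "welfare T \<theta> u = (case \<theta> of (lam, a1, a2) \<Rightarrow>
      ereal (1 - lam) * (\<Sum>i<nusers T. psi (fst u i) a1)
      + ereal lam * (\<Sum>j<nitems T. psi (snd u j) a2))"

definition Theta :: "(real \<times> real \<times> real) set" where
  "Theta = {(lam, a1, a2). 0 < lam \<and> lam < 1 \<and> a1 < 1 \<and> a2 < 1}"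

definition welfare_maximizer :: "rec_problem \<Rightarrow> real \<times> real \<times> real \<Rightarrow> utility \<Rightarrow> bool" where
  "welfare_maximizer T \<theta> u \<longleftrightarrow>
     u \<in> utilities T \<and> (\<forall>u' \<in> utilities T. welfare T \<theta> u' \<le> welfare T \<theta> u)"

definition quality :: "rec_problem \<Rightarrow> nat \<Rightarrow> real" where
  "quality T j = (\<Sum>i<nusers T. mu T i j)"

definition total_quality :: "rec_problem \<Rightarrow> real" where
  "total_quality T = (\<Sum>j<nitems T. quality T j)"

definition total_exposure :: "rec_problem \<Rightarrow> real" where
  "total_exposure T = real (nusers T) * (\<Sum>k<nitems T. \<bar>vexp T k\<bar>)"

definition D_qua :: "rec_problem \<Rightarrow> utility \<Rightarrow> real" where
  "D_qua T u = (1 / real (nusers T + nitems T)) *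
     (\<Sum>j<nitems T. (snd u j - quality T j * total_exposure T / total_quality T)\<^sup>2)"

definition F_qua :: "rec_problem \<Rightarrow> real \<Rightarrow> utility \<Rightarrow> real" where
  "F_qua T \<beta> u = (\<Sum>i<nusers T. fst u i) - \<beta> * sqrt (D_qua T u)"

definition U_qua :: "rec_problem \<Rightarrow> real \<Rightarrow> utility set" where
  "U_qua T \<beta> = {u \<in> utilities T. \<forall>u' \<in> utilities T. F_qua T \<beta> u' \<le> F_qua T \<beta> u}"

definition lorenz_ge :: "real list \<Rightarrow> real list \<Rightarrow> bool" where
  "lorenz_ge xs ys \<longleftrightarrow> length xs = length ys \<and>
     (\<forall>k. 1 \<le> k \<and> k \<le> length xs \<longrightarrow> sum_list (take k (sort ys)) \<le> sum_list (take k (sort xs)))"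

definition lorenz_gt :: "real list \<Rightarrow> real list \<Rightarrow> bool" where
  "lorenz_gt xs ys \<longleftrightarrow> lorenz_ge xs ys \<and>
     (\<exists>k. 1 \<le> k \<and> k \<le> length xs \<and> sum_list (take k (sort ys)) < sum_list (take k (sort xs)))"

definition users_vec :: "rec_problem \<Rightarrow> utility \<Rightarrow> real list" where
  "users_vec T u = map (fst u) [0..<nusers T]"

definition items_vec :: "rec_problem \<Rightarrow> utility \<Rightarrow> real list" where
  "items_vec T u = map (snd u) [0..<nitems T]"

end

theory Submission
  imports Defs "HOL-Library.Multiset"
begin

text \<open>
  Users come in \<open>d + 1\<close> groups of \<open>N0\<close>; group \<open>l\<close> values item \<open>l\<close> at 1, the users outside
  group 0 also value item 0 at \<open>b = (d + 1) / (3 d)\<close>, and only the top rank is exposed.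
  Showing every user its own item gives all users utility 1, the most any user can get, and splits
  the fixed total exposure equally among the items; by strict concavity of \<open>\<psi>\<close> it is therefore
  the unique welfare optimum for every \<open>\<theta>\<close>. The quality targets, however, ask for exposure
  \<open>N0 (d + 4) / 4\<close> of item 0, and every unit of exposure that item 0 takes from a user's own
  item costs the users \<open>1 - b\<close>. So missing the targets gains the users at most \<open>\<surd>n \<surd>D\<close>, the
  optimizers of \<open>F\<^sub>\<beta>\<close> meet the targets exactly once \<open>\<beta> > \<surd>n\<close>, and then the total user
  utility is pinned to \<open>N0 (5 (d + 1) / 6 + 1 / 4)\<close>, a fraction \<open>5 / 6 + 1 / (4 (d + 1))\<close> of
  the optimum.
\<close>

subsection \<open>Tangent lines of the welfare function\<close>

lemma powr_minus_one_div_less: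
  fixes t a :: real
  assumes t: "0 < t" "t \<noteq> 1" and a: "a < 1" "a \<noteq> 0"
  shows "(t powr a - 1) / a < t - 1"
proof -
  define h where "h = (\<lambda>t::real. t - 1 - (t powr a - 1) / a)"
  have der: "DERIV h s :> 1 - s powr (a - 1)" if "0 < s" for s
  proof -
    have "DERIV h s :> 1 - (a * s powr (a - 1)) / a"
      unfolding h_def using that by (auto intro!: derivative_eq_intros)
    thus ?thesis using a by simp
  qed
  have h1: "h 1 = 0" by (simp add: h_def)
  show ?thesis
  proof (cases "1 < t")
    case True
    obtain z where z: "1 < z" "z < t" "h t - h 1 = (t - 1) * (1 - z powr (a - 1))"
      using MVT2[of 1 t h "\<lambda>s. 1 - s powr (a - 1)"] True der by force
    have "z powr (a - 1) < 1" using z a by (simp add: powr_less_one)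
    hence "0 < h t" using z h1 True by simp
    thus ?thesis by (simp add: h_def)
  next
    case False
    hence t1: "t < 1" using t by simp
    obtain z where z: "t < z" "z < 1" "h 1 - h t = (1 - t) * (1 - z powr (a - 1))"
      using MVT2[of t 1 h "\<lambda>s. 1 - s powr (a - 1)"] t1 t der by force
    have "1 < z powr (a - 1)"
      using z a t powr_less_mono2_neg[of "a - 1" z 1] by simp
    hence "(1 - t) * (1 - z powr (a - 1)) < 0" using t1 by (intro mult_pos_neg) auto
    hence "0 < h t" using z h1 by linarith
    thus ?thesis by (simp add: h_def)
  qed
qed

definition psi_real :: "real \<Rightarrow> real \<Rightarrow> real" where
  "psi_real x a = (if a > 0 then x powr a else if a = 0 then ln x else - (x powr a))"

definition psi_deriv :: "real \<Rightarrow> real \<Rightarrow> real" where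
  "psi_deriv y a = (if a = 0 then 1 / y else \<bar>a\<bar> * y powr (a - 1))"

lemma psi_eq_psi_real: "0 < x \<Longrightarrow> psi x a = ereal (psi_real x a)"
  by (simp add: psi_def psi_real_def)

lemma psi_deriv_pos: "0 < y \<Longrightarrow> 0 < psi_deriv y a"
  by (simp add: psi_deriv_def)

lemma psi_deriv_mult_self:
  "0 < y \<Longrightarrow> psi_deriv y a * y = (if a = 0 then 1 else \<bar>a\<bar> * y powr a)"
  by (simp add: psi_deriv_def powr_diff)

lemma psi_less_tangent:
  fixes x y a :: real
  assumes y: "0 < y" and x: "0 \<le> x" "x \<noteq> y" and a: "a < 1"
  shows "psi x a < ereal (psi_real y a + psi_deriv y a * (x - y))"
proof (cases "x = 0")
  case True
  show ?thesis
  proof (cases "0 < a")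
    case True
    have "0 < (1 - a) * y powr a" using a y by simp
    thus ?thesis using True \<open>x = 0\<close> y psi_deriv_mult_self[OF y, of a]
      by (simp add: psi_def psi_real_def algebra_simps)
  qed (use \<open>x = 0\<close> in \<open>simp add: psi_def\<close>)
next
  case False
  define t where "t = x / y"
  have t: "0 < t" "t \<noteq> 1" using x y False by (auto simp: t_def)
  have xy: "x = y * t" using y by (simp add: t_def)
  have tangent: "psi_deriv y a * (x - y) = (if a = 0 then 1 else \<bar>a\<bar> * y powr a) * (t - 1)"
    using psi_deriv_mult_self[OF y, of a] by (simp add: xy algebra_simps)
  have xa: "x powr a = y powr a * t powr a" using xy y t by (simp add: powr_mult)
  have "0 < x" using x False by simp
  hence psi_x: "psi x a = ereal (psi_real x a)" by (rule psi_eq_psi_real)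
  consider "a = 0" | "0 < a" | "a < 0" by linarith
  thus ?thesis
  proof cases
    case 1
    have "ln t < t - 1" using t ln_le_minus_one[of t] ln_eq_minus_one[of t] by fastforce
    thus ?thesis using 1 psi_x tangent y t by (simp add: psi_real_def xy ln_mult)
  next
    case 2
    have "t powr a - 1 < a * (t - 1)"
      using powr_minus_one_div_less[OF t a] 2 by (simp add: divide_less_eq mult.commute)
    hence "y powr a * (t powr a - 1) < y powr a * (a * (t - 1))" using y by simp
    thus ?thesis using 2 psi_x tangent xa by (simp add: psi_real_def algebra_simps)
  next
    case 3
    have "a * (t - 1) < t powr a - 1"
      using powr_minus_one_div_less[OF t a(1)] 3 by (simp add: divide_less_eq mult.commute)
    hence "y powr a * (a * (t - 1)) < y powr a * (t powr a - 1)" using y by simp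
    thus ?thesis using 3 psi_x tangent xa by (simp add: psi_real_def algebra_simps)
  qed
qed

lemma psi_le_tangent:
  assumes "0 < y" "0 \<le> x" "a < 1"
  shows "psi x a \<le> ereal (psi_real y a + psi_deriv y a * (x - y))"
  using assms psi_less_tangent[of y x a] by (cases "x = y") (auto simp: psi_eq_psi_real)

subsection \<open>Lorenz dominance over a constant vector\<close>

lemma sorted_take_sum_le:
  fixes zs :: "real list"
  assumes sorted: "sorted zs" and k: "k \<le> length zs"
  shows "real (length zs) * sum_list (take k zs) \<le> real k * sum_list zs"
proof (cases "k = length zs")
  case False
  define A B where "A = take k zs" and "B = drop k zs"
  have zs: "zs = A @ B" by (simp add: A_def B_def)
  have lA: "length A = k" using k by (simp add: A_def)
  have "B \<noteq> []" using False k by (simp add: B_def)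
  then obtain t B' where B: "B = t # B'" by (cases B) auto
  have "sorted (A @ t # B')" using sorted zs B by simp
  hence A_le: "\<forall>a\<in>set A. a \<le> t" and B_ge: "\<forall>b\<in>set B. t \<le> b"
    by (auto simp: sorted_append B)
  have "sum_list A \<le> sum_list (map (\<lambda>_. t) A)"
    using sum_list_mono[of A id "\<lambda>_. t"] A_le by simp
  hence sA: "sum_list A \<le> real k * t" using lA by (simp add: sum_list_triv)
  have "sum_list (map (\<lambda>_. t) B) \<le> sum_list B"
    using sum_list_mono[of B "\<lambda>_. t" id] B_ge by simp
  hence sB: "real (length B) * t \<le> sum_list B" by (simp add: sum_list_triv)
  have "real (length zs) * sum_list A = real k * sum_list A + real (length B) * sum_list A"
    using zs lA by (simp add: distrib_right)
  also have "\<dots> \<le> real k * sum_list A + real k * sum_list B"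
    using mult_left_mono[OF sA, of "real (length B)"] mult_left_mono[OF sB, of "real k"]
    by (simp add: mult.left_commute)
  also have "\<dots> = real k * sum_list zs" using zs by (simp add: distrib_left)
  finally show ?thesis by (simp add: A_def)
qed simp

lemma sum_list_sort: "sum_list (sort xs) = sum_list (xs :: 'a :: {linorder, comm_monoid_add} list)"
  by (metis mset_sort sum_mset_sum_list)

lemma lorenz_ge_replicate:
  fixes ys :: "real list"
  assumes len: "length ys = n" and sum: "sum_list ys \<le> real n * c"
  shows "lorenz_ge (replicate n c) ys"
  unfolding lorenz_ge_def
proof (intro conjI allI impI)
  show "length (replicate n c) = length ys" using len by simp
  fix k assume k: "1 \<le> k \<and> k \<le> length (replicate n c)"
  have "real n * sum_list (take k (sort ys)) \<le> real k * sum_list ys"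
    using sorted_take_sum_le[of "sort ys" k] k len by (simp add: sum_list_sort)
  also have "\<dots> \<le> real k * (real n * c)" using sum by (intro mult_left_mono) auto
  finally have "sum_list (take k (sort ys)) \<le> real k * c" using k
    by (simp add: algebra_simps)
  thus "sum_list (take k (sort ys)) \<le> sum_list (take k (sort (replicate n c)))"
    using k by (simp add: sorted_sort_id sum_list_replicate)
qed

lemma lorenz_gt_replicate_of_sum_less:
  fixes ys :: "real list"
  assumes len: "length ys = n" and sum: "sum_list ys < real n * c"
  shows "lorenz_gt (replicate n c) ys"
  unfolding lorenz_gt_def
proof
  show "lorenz_ge (replicate n c) ys" using lorenz_ge_replicate[OF len] sum by simp
  have "1 \<le> n" using len sum by (cases n) auto
  thus "\<exists>k\<ge>1. k \<le> length (replicate n c) \<and>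
      sum_list (take k (sort ys)) < sum_list (take k (sort (replicate n c)))"
    using len sum
    by (intro exI[of _ n]) (simp add: sorted_sort_id sum_list_replicate sum_list_sort)
qed

lemma lorenz_gt_replicate_of_nth_less:
  fixes ys :: "real list"
  assumes len: "length ys = n" and sum: "sum_list ys \<le> real n * c"
    and j: "j < n" and less: "ys ! j < c"
  shows "lorenz_gt (replicate n c) ys"
  unfolding lorenz_gt_def
proof
  show "lorenz_ge (replicate n c) ys" using lorenz_ge_replicate[OF len sum] .
  have "sort ys \<noteq> []" using j len by (metis length_sort list.size(3) not_less_zero)
  then obtain z zs where sort: "sort ys = z # zs" by (cases "sort ys") auto
  have "ys ! j \<in> set (z # zs)" using j len by (simp flip: sort)
  moreover have "sorted (z # zs)" by (metis sort sorted_sort)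
  ultimately have "z < c" using less by auto
  thus "\<exists>k\<ge>1. k \<le> length (replicate n c) \<and>
      sum_list (take k (sort ys)) < sum_list (take k (sort (replicate n c)))"
    using j sort by (intro exI[of _ 1]) (simp add: sorted_sort_id)
qed

subsection \<open>Ranking tensors\<close>

lemma doubly_stochastic_entry_bounds:
  assumes "doubly_stochastic p A" "j < p" "k < p"
  shows "0 \<le> A j k" "A j k \<le> 1"
proof -
  show "0 \<le> A j k" using assms by (simp add: doubly_stochastic_def)
  have "A j k \<le> (\<Sum>k'<p. A j k')"
    using assms by (intro member_le_sum) (auto simp: doubly_stochastic_def)
  thus "A j k \<le> 1" using assms by (simp add: doubly_stochastic_def)
qed

lemma doubly_stochastic_two_entries_le:
  assumes "doubly_stochastic p A" "j < p" "j' < p" "j \<noteq> j'" "k < p"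
  shows "A j k + A j' k \<le> 1"
proof -
  have "(\<Sum>l\<in>{j, j'}. A l k) \<le> (\<Sum>l<p. A l k)"
    using assms by (intro sum_mono2) (auto simp: doubly_stochastic_def)
  thus ?thesis using assms by (simp add: doubly_stochastic_def)
qed

definition spread_first_column :: "nat \<Rightarrow> (nat \<Rightarrow> real) \<Rightarrow> nat \<Rightarrow> nat \<Rightarrow> real" where
  "spread_first_column p x j k = (if k = 0 then x j else (1 - x j) / real (p - 1))"

lemma doubly_stochastic_spread_first_column:
  assumes p: "2 \<le> p" and nonneg: "\<And>j. j < p \<Longrightarrow> 0 \<le> x j" and sum: "(\<Sum>j<p. x j) = 1"
  shows "doubly_stochastic p (spread_first_column p x)"
  unfolding doubly_stochastic_def
proof (intro allI impI conjI)
  obtain q where q: "p = Suc q" "1 \<le> q" using p by (cases p) auto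
  have le1: "x j \<le> 1" if "j < p" for j
    using member_le_sum[of j "{..<p}" x] nonneg sum that by simp
  fix j
  {
    fix k assume "j < p" "k < p"
    thus "0 \<le> spread_first_column p x j k"
      using nonneg le1 by (simp add: spread_first_column_def)
  }
  show "(\<Sum>k<p. spread_first_column p x j k) = 1"
    using q by (simp only: sum.lessThan_Suc_shift) (simp add: spread_first_column_def)
  assume j: "j < p"
  show "(\<Sum>l<p. spread_first_column p x l j) = 1"
  proof (cases "j = 0")
    case False
    have "(\<Sum>l<p. spread_first_column p x l j) = (real p - (\<Sum>l<p. x l)) / real q"
      using False q by (simp add: spread_first_column_def sum_divide_distrib[symmetric] sum_subtractf)
    thus ?thesis using sum q by simp
  qed (simp add: spread_first_column_def sum)
qed

lemma sum_item_util:
  assumes P: "ranking_tensor T P"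
  shows "(\<Sum>j<nitems T. item_util T P j) = real (nusers T) * (\<Sum>k<nitems T. vexp T k)"
proof -
  have "(\<Sum>j<nitems T. item_util T P j)
      = (\<Sum>j<nitems T. \<Sum>i<nusers T. \<Sum>k<nitems T. P i j k * vexp T k)"
    by (simp add: item_util_def expo_def)
  also have "\<dots> = (\<Sum>i<nusers T. \<Sum>j<nitems T. \<Sum>k<nitems T. P i j k * vexp T k)"
    by (rule sum.swap)
  also have "\<dots> = (\<Sum>i<nusers T. \<Sum>k<nitems T. \<Sum>j<nitems T. P i j k * vexp T k)"
    by (rule sum.cong[OF refl], rule sum.swap)
  also have "\<dots> = (\<Sum>i<nusers T. \<Sum>k<nitems T. (\<Sum>j<nitems T. P i j k) * vexp T k)"
    by (simp only: sum_distrib_right)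
  also have "\<dots> = (\<Sum>i<nusers T. \<Sum>k<nitems T. vexp T k)"
    using P by (simp add: ranking_tensor_def doubly_stochastic_def)
  finally show ?thesis by simp
qed

lemma item_util_nonneg:
  assumes "valid_problem T" "ranking_tensor T P"
  shows "0 \<le> item_util T P j"
  using assms unfolding item_util_def expo_def valid_problem_def ranking_tensor_def doubly_stochastic_def
  by (auto intro!: sum_nonneg)

subsection \<open>Welfare maximizers\<close>

lemma sum_ereal_mono:
  assumes "\<And>j. j \<in> A \<Longrightarrow> f j \<le> ereal (g j)"
  shows "sum f A \<le> ereal (sum g A)"
proof -
  have "sum f A \<le> (\<Sum>j\<in>A. ereal (g j))" using assms by (intro sum_mono)
  thus ?thesis by simp
qed

lemma sum_ereal_strict_mono_ex1:
  assumes fin: "finite A" and le: "\<And>j. j \<in> A \<Longrightarrow> f j \<le> ereal (g j)"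
    and j0: "j0 \<in> A" and lt: "f j0 < ereal (g j0)"
  shows "sum f A < ereal (sum g A)"
proof -
  have split_f: "sum f A = f j0 + sum f (A - {j0})" using fin j0 by (simp add: sum.remove)
  have split_g: "sum g A = g j0 + sum g (A - {j0})" using fin j0 by (simp add: sum.remove)
  have rest: "sum f (A - {j0}) \<le> ereal (sum g (A - {j0}))" using le by (intro sum_ereal_mono) auto
  show ?thesis
    unfolding split_f split_g using lt rest
    by (cases "f j0"; cases "sum f (A - {j0})") simp_all
qed

lemma ereal_lincomb_strict_mono:
  fixes X Y :: ereal
  assumes c: "0 < c1" "0 < c2" and X: "X \<le> ereal x" and Y: "Y \<le> ereal y"
    and strict: "X < ereal x \<or> Y < ereal y"
  shows "ereal c1 * X + ereal c2 * Y < ereal (c1 * x + c2 * y)"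
proof (cases X; cases Y)
  fix a b assume "X = ereal a" "Y = ereal b"
  hence "a \<le> x" "b \<le> y" "a < x \<or> b < y" using X Y strict by auto
  hence "c1 * a + c2 * b < c1 * x + c2 * y" using c
    by (smt (verit) mult_strict_left_mono mult_left_mono)
  thus ?thesis using \<open>X = ereal a\<close> \<open>Y = ereal b\<close> by simp
qed (use X Y c in auto)

lemma sum_psi_le_sum_tangent:
  assumes y: "0 < y" and a: "a < 1" and x: "\<And>j. j \<in> A \<Longrightarrow> 0 \<le> x j"
  shows "(\<Sum>j\<in>A. psi (x j) a) \<le> ereal (\<Sum>j\<in>A. psi_real y a + psi_deriv y a * (x j - y))"
    and "finite A \<Longrightarrow> j0 \<in> A \<Longrightarrow> x j0 \<noteq> y \<Longrightarrow>
      (\<Sum>j\<in>A. psi (x j) a) < ereal (\<Sum>j\<in>A. psi_real y a + psi_deriv y a * (x j - y))"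
  using psi_le_tangent[OF y x a] psi_less_tangent[OF y x _ a]
  by (auto intro: sum_ereal_mono sum_ereal_strict_mono_ex1)

lemma sum_psi_capped:
  assumes c: "0 < c" and a: "a < 1" and x: "\<And>i. i \<in> A \<Longrightarrow> 0 \<le> x i \<and> x i \<le> c"
  shows "(\<Sum>i\<in>A. psi (x i) a) \<le> ereal (real (card A) * psi_real c a)"
    and "finite A \<Longrightarrow> i0 \<in> A \<Longrightarrow> x i0 \<noteq> c \<Longrightarrow>
      (\<Sum>i\<in>A. psi (x i) a) < ereal (real (card A) * psi_real c a)"
proof -
  have "(\<Sum>i\<in>A. psi_real c a + psi_deriv c a * (x i - c)) \<le> (\<Sum>i\<in>A. psi_real c a)"
    using x psi_deriv_pos[OF c, of a] by (intro sum_mono) (simp add: mult_nonneg_nonpos)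
  hence le: "ereal (\<Sum>i\<in>A. psi_real c a + psi_deriv c a * (x i - c))
      \<le> ereal (real (card A) * psi_real c a)" by simp
  show "(\<Sum>i\<in>A. psi (x i) a) \<le> ereal (real (card A) * psi_real c a)"
    using order.trans[OF sum_psi_le_sum_tangent(1)[OF c a] le] x by blast
  show "finite A \<Longrightarrow> i0 \<in> A \<Longrightarrow> x i0 \<noteq> c \<Longrightarrow>
      (\<Sum>i\<in>A. psi (x i) a) < ereal (real (card A) * psi_real c a)"
    using order.strict_trans2[OF sum_psi_le_sum_tangent(2)[OF c a] le] x by blast
qed

lemma sum_psi_fixed_total:
  assumes e: "0 < e" and a: "a < 1" and x: "\<And>j. j \<in> A \<Longrightarrow> 0 \<le> x j"
    and total: "(\<Sum>j\<in>A. x j) = real (card A) * e"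
  shows "(\<Sum>j\<in>A. psi (x j) a) \<le> ereal (real (card A) * psi_real e a)"
    and "finite A \<Longrightarrow> j0 \<in> A \<Longrightarrow> x j0 \<noteq> e \<Longrightarrow>
      (\<Sum>j\<in>A. psi (x j) a) < ereal (real (card A) * psi_real e a)"
proof -
  have tangents: "(\<Sum>j\<in>A. psi_real e a + psi_deriv e a * (x j - e)) = real (card A) * psi_real e a"
    using total by (simp add: sum.distrib sum_distrib_left[symmetric] sum_subtractf)
  show "(\<Sum>j\<in>A. psi (x j) a) \<le> ereal (real (card A) * psi_real e a)"
    using sum_psi_le_sum_tangent(1)[of e a A x] e a x unfolding tangents by blast
  show "finite A \<Longrightarrow> j0 \<in> A \<Longrightarrow> x j0 \<noteq> e \<Longrightarrow>
      (\<Sum>j\<in>A. psi (x j) a) < ereal (real (card A) * psi_real e a)"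
    using sum_psi_le_sum_tangent(2)[of e a A x j0] e a x unfolding tangents by blast
qed

lemma welfare_less_uniform:
  assumes \<theta>: "\<theta> \<in> Theta" and c: "0 < c" and e: "0 < e"
    and ustar: "\<forall>i<nusers T. fst ustar i = c" "\<forall>j<nitems T. snd ustar j = e"
    and users: "\<forall>i<nusers T. 0 \<le> fst u i \<and> fst u i \<le> c"
    and items: "\<forall>j<nitems T. 0 \<le> snd u j" "(\<Sum>j<nitems T. snd u j) = real (nitems T) * e"
    and deviates: "(\<exists>i<nusers T. fst u i \<noteq> c) \<or> (\<exists>j<nitems T. snd u j \<noteq> e)"
  shows "welfare T \<theta> u < welfare T \<theta> ustar"
proof -
  obtain lam a1 a2 where \<theta>_eq: "\<theta> = (lam, a1, a2)" by (cases \<theta>) auto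
  have lam: "0 < lam" "lam < 1" and a: "a1 < 1" "a2 < 1"
    using \<theta> by (auto simp: Theta_def \<theta>_eq)
  define X Y where "X = (\<Sum>i<nusers T. psi (fst u i) a1)" and "Y = (\<Sum>j<nitems T. psi (snd u j) a2)"
  define x y where "x = real (nusers T) * psi_real c a1" and "y = real (nitems T) * psi_real e a2"
  note users_psi = sum_psi_capped[OF c a(1), of "{..<nusers T}" "fst u"]
  note items_psi = sum_psi_fixed_total[OF e a(2), of "{..<nitems T}" "snd u"]
  have "X \<le> ereal x" "Y \<le> ereal y" "X < ereal x \<or> Y < ereal y"
    using users_psi items_psi users items deviates by (auto simp: X_def Y_def x_def y_def)
  hence "ereal (1 - lam) * X + ereal lam * Y < ereal ((1 - lam) * x + lam * y)"
    using lam by (intro ereal_lincomb_strict_mono) auto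
  moreover have "welfare T \<theta> ustar = ereal ((1 - lam) * x + lam * y)"
    using ustar c e by (simp add: welfare_def \<theta>_eq x_def y_def psi_eq_psi_real)
  ultimately show ?thesis by (simp add: welfare_def \<theta>_eq X_def Y_def)
qed

lemma welfare_maximizer_uniform:
  assumes \<theta>: "\<theta> \<in> Theta" and c: "0 < c" and e: "0 < e" and ustar: "ustar \<in> utilities T"
    "\<forall>i<nusers T. fst ustar i = c" "\<forall>j<nitems T. snd ustar j = e"
    and bounds: "\<And>u. u \<in> utilities T \<Longrightarrow>
      (\<forall>i<nusers T. 0 \<le> fst u i \<and> fst u i \<le> c) \<and> (\<forall>j<nitems T. 0 \<le> snd u j) \<and>
      (\<Sum>j<nitems T. snd u j) = real (nitems T) * e"
    and u: "welfare_maximizer T \<theta> u"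
  shows "(\<forall>i<nusers T. fst u i = c) \<and> (\<forall>j<nitems T. snd u j = e)"
  using u ustar bounds[of u] welfare_less_uniform[OF \<theta> c e ustar(2,3), of u]
  by (auto simp: welfare_maximizer_def not_less[symmetric])

subsection \<open>Optimizers of quality-weighted exposure\<close>

lemma D_qua_nonneg: "0 \<le> D_qua T u"
  by (simp add: D_qua_def sum_nonneg)

lemma D_qua_eq_0_iff:
  "D_qua T u = 0 \<longleftrightarrow>
    (\<forall>j<nitems T. snd u j = quality T j * total_exposure T / total_quality T)"
  by (cases "nitems T = 0") (auto simp: D_qua_def sum_nonneg_eq_0_iff)

lemma abs_item_deviation_le_D_qua:
  assumes "j < nitems T"
  shows "\<bar>snd u j - quality T j * total_exposure T / total_quality T\<bar>
    \<le> sqrt (real (nusers T + nitems T) * D_qua T u)"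
proof -
  let ?dev = "\<lambda>j. (snd u j - quality T j * total_exposure T / total_quality T)\<^sup>2"
  have "?dev j \<le> (\<Sum>j<nitems T. ?dev j)" using assms by (intro member_le_sum) auto
  also have "\<dots> = real (nusers T + nitems T) * D_qua T u"
    using assms by (simp add: D_qua_def del: of_nat_add)
  finally show ?thesis by (metis real_sqrt_abs real_sqrt_le_mono)
qed

lemma U_qua_fair_of_bound:
  assumes u0: "u0 \<in> utilities T" "D_qua T u0 = 0" "(\<Sum>i<nusers T. fst u0 i) = S"
    and bound: "\<And>u. u \<in> utilities T \<Longrightarrow> (\<Sum>i<nusers T. fst u i) \<le> S + K * sqrt (D_qua T u)"
    and \<beta>: "K < \<beta>" and u: "u \<in> U_qua T \<beta>"
  shows "D_qua T u = 0" "(\<Sum>i<nusers T. fst u i) = S"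
proof -
  have "u \<in> utilities T" and "F_qua T \<beta> u0 \<le> F_qua T \<beta> u"
    using u u0(1) by (auto simp: U_qua_def)
  hence upper: "(\<Sum>i<nusers T. fst u i) \<le> S + K * sqrt (D_qua T u)"
    and lower: "S + \<beta> * sqrt (D_qua T u) \<le> (\<Sum>i<nusers T. fst u i)"
    using bound u0 by (auto simp: F_qua_def)
  hence "(\<beta> - K) * sqrt (D_qua T u) \<le> 0" by (simp add: algebra_simps)
  thus D0: "D_qua T u = 0" using \<beta> D_qua_nonneg[of T u] by (simp add: mult_le_0_iff)
  show "(\<Sum>i<nusers T. fst u i) = S" using upper lower D0 by simp
qed

subsection \<open>The example problems\<close>

lemma sum_lessThan_mult_div:
  fixes g :: "nat \<Rightarrow> 'a :: comm_semiring_1"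
  assumes "0 < N"
  shows "(\<Sum>i<N * n. g (i div N)) = of_nat N * (\<Sum>l<n. g l)"
proof -
  have "(\<Sum>i<N * n. g (i div N)) = (\<Sum>l<n. \<Sum>i\<in>{l * N..<l * N + N}. g (i div N))"
    using sum.nat_group[of "\<lambda>i. g (i div N)" N n] by (simp add: mult.commute)
  also have "\<dots> = (\<Sum>l<n. of_nat N * g l)"
  proof (rule sum.cong[OF refl])
    fix l
    have "i div N = l" if "i \<in> {l * N..<l * N + N}" for i
      using assms that by (auto intro!: div_nat_eqI simp: algebra_simps)
    thus "(\<Sum>i\<in>{l * N..<l * N + N}. g (i div N)) = of_nat N * g l" by simp
  qed
  finally show ?thesis by (simp add: sum_distrib_left)
qed

text \<open>User \<open>i\<close> belongs to group \<open>i div N0\<close>. The value \<open>(d + 1) / (3 d)\<close> of item 0 for the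
  users outside group 0 makes the quality targets \<open>N0 (d + 4) / 4\<close> for item 0 and
  \<open>3 N0 / 4\<close> for every other item.\<close>

definition example_problem :: "nat \<Rightarrow> nat \<Rightarrow> rec_problem" where
  "example_problem N0 d = \<lparr>nusers = N0 * (d + 1), nitems = d + 1,
     mu = (\<lambda>i j. if j = i div N0 then 1 else if j = 0 then real (d + 1) / (3 * real d) else 0),
     vexp = (\<lambda>k. if k = 0 then 1 else 0)\<rparr>"

locale example =
  fixes N0 d :: nat
  assumes N0: "1 \<le> N0" and d: "1 \<le> d"
begin

abbreviation "T \<equiv> example_problem N0 d"
abbreviation "b \<equiv> real (d + 1) / (3 * real d)"
abbreviation "beta_threshold \<equiv> sqrt (real (N0 * (d + 1) + (d + 1)))"

lemma T_simps [simp]: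
  "nusers T = N0 * (d + 1)" "nitems T = d + 1"
  "mu T i j = (if j = i div N0 then 1 else if j = 0 then b else 0)"
  "vexp T k = (if k = 0 then 1 else 0)"
  by (simp_all add: example_problem_def)

lemma b_nonneg: "0 \<le> b"
  by simp

lemma b_less_one: "b < 1"
  using d by (simp add: field_simps)

lemma valid_T: "valid_problem T"
  by (auto simp: valid_problem_def)

lemma group_less: "i < N0 * (d + 1) \<Longrightarrow> i div N0 < d + 1"
  using N0 by (simp add: div_less_iff_less_mult mult.commute)

lemma sum_vexp: "(\<Sum>k<nitems T. vexp T k) = 1"
  by (simp add: sum.If_cases)

lemma expo_T: "expo T P i j = P i j 0"
  by (simp add: expo_def if_distrib cong: if_cong)

lemma item_util_T: "j < d + 1 \<Longrightarrow> item_util T P j = (\<Sum>i<N0 * (d + 1). P i j 0)"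
  by (simp add: item_util_def expo_T)

lemma user_util_T:
  assumes i: "i < N0 * (d + 1)"
  shows "user_util T P i = P i (i div N0) 0 + (if i div N0 = 0 then 0 else b * P i 0 0)"
proof -
  define l where "l = i div N0"
  have l: "l < d + 1" using group_less[OF i] by (simp add: l_def)
  have "user_util T P i = (\<Sum>j<d + 1. mu T i j * P i j 0)"
    using i by (simp add: user_util_def expo_T)
  also have "\<dots> = (\<Sum>j<d + 1. (if j = l then P i l 0 else 0)
      + (if j = 0 then (if l = 0 then 0 else b * P i 0 0) else 0))"
    by (intro sum.cong) (auto simp: l_def)
  also have "\<dots> = P i l 0 + (if l = 0 then 0 else b * P i 0 0)"
    using l by (simp add: sum.distrib)
  finally show ?thesis by (simp add: l_def)
qed

lemma user_util_bounds:
  assumes P: "ranking_tensor T P" and i: "i < N0 * (d + 1)"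
  shows "0 \<le> user_util T P i" "user_util T P i \<le> 1"
    "user_util T P i \<le> (if i div N0 = 0 then 2 - b else 1) - (1 - b) * P i 0 0"
proof -
  define l where "l = i div N0"
  have l: "l < d + 1" using group_less[OF i] by (simp add: l_def)
  have ds: "doubly_stochastic (d + 1) (P i)" using P i by (simp add: ranking_tensor_def)
  have u: "user_util T P i = P i l 0 + (if l = 0 then 0 else b * P i 0 0)"
    using user_util_T[OF i] by (simp add: l_def)
  have x0: "0 \<le> P i 0 0" "P i 0 0 \<le> 1" and xl: "0 \<le> P i l 0" "P i l 0 \<le> 1"
    using doubly_stochastic_entry_bounds[OF ds] l by auto
  have pair: "P i l 0 + P i 0 0 \<le> 1" if "l \<noteq> 0"
    using doubly_stochastic_two_entries_le[OF ds l, of 0 0] that by simp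
  have "b * P i 0 0 \<le> P i 0 0"
    using mult_left_le_one_le[OF x0(1) b_nonneg less_imp_le[OF b_less_one]] .
  thus "0 \<le> user_util T P i" "user_util T P i \<le> 1"
    using u x0 xl pair by (auto split: if_splits)
  have "(2 - b) * P i 0 0 \<le> 2 - b" using x0 b_less_one by (simp add: mult_le_cancel_left1)
  thus "user_util T P i \<le> (if i div N0 = 0 then 2 - b else 1) - (1 - b) * P i 0 0"
    using u pair by (auto simp: l_def[symmetric] algebra_simps)
qed

lemma ranking_tensor_of_first_columns:
  assumes "\<And>i j. i < N0 * (d + 1) \<Longrightarrow> j < d + 1 \<Longrightarrow> 0 \<le> x i j"
    and "\<And>i. i < N0 * (d + 1) \<Longrightarrow> (\<Sum>j<d + 1. x i j) = 1"
  shows "ranking_tensor T (\<lambda>i. spread_first_column (d + 1) (x i))"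
  using assms d by (auto simp: ranking_tensor_def intro!: doubly_stochastic_spread_first_column)

definition own_item_ranking :: "nat \<Rightarrow> nat \<Rightarrow> nat \<Rightarrow> real" where
  "own_item_ranking i = spread_first_column (d + 1) (\<lambda>j. if j = i div N0 then 1 else 0)"

lemma own_item_ranking:
  "ranking_tensor T own_item_ranking"
  "i < N0 * (d + 1) \<Longrightarrow> user_util T own_item_ranking i = 1"
  "j < d + 1 \<Longrightarrow> item_util T own_item_ranking j = real N0"
proof -
  show "ranking_tensor T own_item_ranking"
    unfolding own_item_ranking_def
  proof (rule ranking_tensor_of_first_columns)
    show "(\<Sum>j<d + 1. if j = i div N0 then 1 else 0) = 1" if "i < N0 * (d + 1)" for i
      using group_less[OF that] by simp
  qed simp
  show "i < N0 * (d + 1) \<Longrightarrow> user_util T own_item_ranking i = 1"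
    by (simp add: user_util_T own_item_ranking_def spread_first_column_def)
  assume j: "j < d + 1"
  have "item_util T own_item_ranking j
      = (\<Sum>i<N0 * (d + 1). (\<lambda>l. if j = l then 1 else 0) (i div N0))"
    using j by (simp add: item_util_T own_item_ranking_def spread_first_column_def eq_commute)
  also have "\<dots> = real N0" using N0 j by (subst sum_lessThan_mult_div) auto
  finally show "item_util T own_item_ranking j = real N0" .
qed

lemma welfare_maximizer_T:
  assumes "\<theta> \<in> Theta" "welfare_maximizer T \<theta> u"
  shows "(\<forall>i<N0 * (d + 1). fst u i = 1) \<and> (\<forall>j<d + 1. snd u j = real N0)"
proof -
  have own: "(user_util T own_item_ranking, item_util T own_item_ranking) \<in> utilities T"
    using own_item_ranking(1) by (auto simp: utilities_def)
  have bounds: "(\<forall>i<nusers T. 0 \<le> fst v i \<and> fst v i \<le> 1) \<and> (\<forall>j<nitems T. 0 \<le> snd v j)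
      \<and> (\<Sum>j<nitems T. snd v j) = real (nitems T) * real N0" if v_in: "v \<in> utilities T" for v
  proof -
    obtain P where P: "ranking_tensor T P" and v: "v = (user_util T P, item_util T P)"
      using v_in unfolding utilities_def by blast
    have "(\<Sum>j<nitems T. item_util T P j) = real (nitems T) * real N0"
      unfolding sum_item_util[OF P] sum_vexp by (simp only: T_simps of_nat_mult mult.commute mult_1_right)
    thus ?thesis using user_util_bounds(1,2)[OF P] item_util_nonneg[OF valid_T P] by (simp add: v)
  qed
  have "0 < real N0" using N0 by simp
  from welfare_maximizer_uniform[OF assms(1) zero_less_one this own _ _ bounds assms(2)]
  show ?thesis using own_item_ranking(2,3) by simp
qed

definition fair_exposure :: "nat \<Rightarrow> real" where
  "fair_exposure j = (if j = 0 then real N0 * (real d + 4) / 4 else 3 * real N0 / 4)"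

definition fair_user_sum :: real where
  "fair_user_sum = real N0 * (5 * real (d + 1) / 6 + 1 / 4)"

lemma quality_T:
  assumes j: "j < d + 1"
  shows "quality T j = (if j = 0 then real N0 * (real d + 4) / 3 else real N0)"
proof -
  let ?g = "\<lambda>l. if j = l then 1 else if j = 0 then b else 0"
  have "quality T j = (\<Sum>i<N0 * (d + 1). ?g (i div N0))"
    by (simp add: quality_def)
  also have "\<dots> = real N0 * (\<Sum>l<d + 1. ?g l)"
    using N0 by (intro sum_lessThan_mult_div) simp
  also have "(\<Sum>l<d + 1. ?g l) = (if j = 0 then (real d + 4) / 3 else 1)"
  proof (cases "j = 0")
    case True
    have "(\<Sum>l<Suc d. ?g l) = 1 + real d * b"
      using True by (simp only: sum.lessThan_Suc_shift) simp
    thus ?thesis using True d by (simp add: field_simps)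
  qed (use j in simp)
  finally show ?thesis by simp
qed

lemma quality_target:
  assumes j: "j < d + 1"
  shows "quality T j * total_exposure T / total_quality T = fair_exposure j"
proof -
  have "total_quality T = quality T 0 + (\<Sum>j<d. quality T (Suc j))"
    unfolding total_quality_def by (simp only: T_simps Suc_eq_plus1[symmetric] sum.lessThan_Suc_shift)
  also have "\<dots> = real N0 * (real d + 4) / 3 + real d * real N0"
    by (simp add: quality_T)
  finally have Q: "total_quality T = 4 / 3 * (real N0 * real (d + 1))"
    by (simp add: field_simps)
  have "\<bar>vexp T k\<bar> = vexp T k" for k by simp
  hence E: "total_exposure T = real N0 * real (d + 1)"
    unfolding total_exposure_def sum_vexp by (simp add: distrib_left)
  have "real N0 * real (d + 1) \<noteq> 0" using N0 by simp
  hence "total_exposure T / total_quality T = 3 / 4" by (simp add: Q E)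
  hence "quality T j * total_exposure T / total_quality T = quality T j * (3 / 4)"
    by (simp only: times_divide_eq_right[symmetric])
  also have "\<dots> = fair_exposure j" using j by (simp add: quality_T fair_exposure_def)
  finally show ?thesis .
qed

lemma sum_fair_exposure: "(\<Sum>j<d + 1. fair_exposure j) = real (d + 1) * real N0"
  by (simp only: Suc_eq_plus1[symmetric] sum.lessThan_Suc_shift) (simp add: fair_exposure_def field_simps)

definition fair_column :: "nat \<Rightarrow> nat \<Rightarrow> real" where
  "fair_column l j = (if j = l then (if l = 0 then 1 else 3 / 4) else if j = 0 then 1 / 4 else 0)"

definition fair_ranking :: "nat \<Rightarrow> nat \<Rightarrow> nat \<Rightarrow> real" where
  "fair_ranking i = spread_first_column (d + 1) (fair_column (i div N0))"

lemma sum_fair_column: "l < d + 1 \<Longrightarrow> (\<Sum>j<d + 1. fair_column l j) = 1"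
  by (cases "l = 0") (simp_all add: fair_column_def sum.If_cases)

lemma fair_ranking:
  "ranking_tensor T fair_ranking"
  "j < d + 1 \<Longrightarrow> item_util T fair_ranking j = fair_exposure j"
  "(\<Sum>i<N0 * (d + 1). user_util T fair_ranking i) = fair_user_sum"
proof -
  show "ranking_tensor T fair_ranking"
    unfolding fair_ranking_def
  proof (rule ranking_tensor_of_first_columns)
    show "(\<Sum>j<d + 1. fair_column (i div N0) j) = 1" if "i < N0 * (d + 1)" for i
      using sum_fair_column group_less[OF that] by simp
  qed (simp add: fair_column_def)
  have user: "user_util T fair_ranking i = (if i div N0 = 0 then 1 else 3 / 4 + b / 4)"
    if "i < N0 * (d + 1)" for i
    using that by (simp add: user_util_T fair_ranking_def spread_first_column_def fair_column_def)
  have "(\<Sum>i<N0 * (d + 1). user_util T fair_ranking i)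
      = (\<Sum>i<N0 * (d + 1). (\<lambda>l. if l = 0 then 1 else 3 / 4 + b / 4) (i div N0))"
    using user by (intro sum.cong) auto
  also have "\<dots> = real N0 * (\<Sum>l<d + 1. if l = 0 then 1 else 3 / 4 + b / 4)"
    using N0 by (intro sum_lessThan_mult_div) simp
  also have "(\<Sum>l<d + 1. if l = 0 then 1 else 3 / 4 + b / 4) = 1 + real d * (3 / 4 + b / 4)"
    by (simp only: Suc_eq_plus1[symmetric] sum.lessThan_Suc_shift) simp
  also have "real N0 * \<dots> = fair_user_sum"
    using d by (simp add: fair_user_sum_def field_simps)
  finally show "(\<Sum>i<N0 * (d + 1). user_util T fair_ranking i) = fair_user_sum" .
  assume j: "j < d + 1"
  have "item_util T fair_ranking j = (\<Sum>i<N0 * (d + 1). (\<lambda>l. fair_column l j) (i div N0))"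
    using j by (simp add: item_util_T fair_ranking_def spread_first_column_def)
  also have "\<dots> = real N0 * (\<Sum>l<d + 1. fair_column l j)"
    using N0 by (intro sum_lessThan_mult_div) simp
  also have "(\<Sum>l<d + 1. fair_column l j) = (if j = 0 then 1 + real d / 4 else 3 / 4)"
  proof (cases "j = 0")
    case True
    thus ?thesis by (simp only: Suc_eq_plus1[symmetric] sum.lessThan_Suc_shift) (simp add: fair_column_def)
  next
    case False
    have "(\<Sum>l<d + 1. fair_column l j) = (\<Sum>l<d + 1. if l = j then 3 / 4 else 0)"
      using False by (intro sum.cong) (auto simp: fair_column_def)
    thus ?thesis using j False by simp
  qed
  finally show "item_util T fair_ranking j = fair_exposure j"
    by (simp add: fair_exposure_def field_simps)
qed

lemma sum_user_util_le:
  assumes P: "ranking_tensor T P"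
  shows "(\<Sum>i<N0 * (d + 1). user_util T P i)
    \<le> fair_user_sum + beta_threshold * sqrt (D_qua T (user_util T P, item_util T P))"
proof -
  let ?g = "\<lambda>l. if l = 0 then 2 - b else 1"
  define e0 where "e0 = item_util T P 0"
  have "(\<Sum>i<N0 * (d + 1). user_util T P i) \<le> (\<Sum>i<N0 * (d + 1). ?g (i div N0) - (1 - b) * P i 0 0)"
    using user_util_bounds(3)[OF P] by (intro sum_mono) auto
  also have "\<dots> = (\<Sum>i<N0 * (d + 1). ?g (i div N0)) - (1 - b) * e0"
    by (simp add: sum_subtractf sum_distrib_left e0_def item_util_T)
  also have "\<dots> = real N0 * (\<Sum>l<d + 1. ?g l) - (1 - b) * e0"
    using N0 by (subst sum_lessThan_mult_div) simp_all
  also have "\<dots> = fair_user_sum + (1 - b) * (fair_exposure 0 - e0)"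
    using d by (simp only: Suc_eq_plus1[symmetric] sum.lessThan_Suc_shift)
      (simp add: fair_user_sum_def fair_exposure_def field_simps)
  finally have users: "(\<Sum>i<N0 * (d + 1). user_util T P i)
    \<le> fair_user_sum + (1 - b) * (fair_exposure 0 - e0)" .
  have "(1 - b) * (fair_exposure 0 - e0) \<le> (1 - b) * \<bar>e0 - fair_exposure 0\<bar>"
    using b_less_one by (intro mult_left_mono) auto
  also have "\<dots> \<le> \<bar>e0 - fair_exposure 0\<bar>"
    using b_less_one by (intro mult_left_le_one_le) auto
  also have "\<dots> \<le> sqrt (real (N0 * (d + 1) + (d + 1)) * D_qua T (user_util T P, item_util T P))"
    using abs_item_deviation_le_D_qua[of 0 T "(user_util T P, item_util T P)"]
    by (simp add: e0_def quality_target)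
  finally show ?thesis using users unfolding real_sqrt_mult by linarith
qed

lemma fair_user_sum_less: "fair_user_sum < real (N0 * (d + 1))"
  using N0 d by (simp add: fair_user_sum_def field_simps)

lemma fair_user_sum_ratio: "fair_user_sum / real (N0 * (d + 1)) = 5 / 6 + 1 / (4 * real (d + 1))"
proof -
  have "fair_user_sum = (5 / 6 + 1 / (4 * real (d + 1))) * real (N0 * (d + 1))"
    by (simp add: fair_user_sum_def field_simps)
  moreover have "real (N0 * (d + 1)) \<noteq> 0" using N0 by (simp del: of_nat_mult)
  ultimately show ?thesis by simp
qed

lemma U_qua_T:
  assumes \<beta>: "beta_threshold < \<beta>" and u: "u \<in> U_qua T \<beta>"
  shows "\<forall>j<d + 1. snd u j = fair_exposure j" "(\<Sum>i<N0 * (d + 1). fst u i) = fair_user_sum"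
proof -
  have fair_D: "D_qua T (user_util T fair_ranking, item_util T fair_ranking) = 0"
    using fair_ranking(2) by (simp add: D_qua_eq_0_iff quality_target)
  have fair_in: "(user_util T fair_ranking, item_util T fair_ranking) \<in> utilities T"
    using fair_ranking(1) by (auto simp: utilities_def)
  have fair_sum: "(\<Sum>i<nusers T. fst (user_util T fair_ranking, item_util T fair_ranking) i)
      = fair_user_sum"
    using fair_ranking(3) by simp
  have bound: "(\<Sum>i<nusers T. fst v i)
      \<le> fair_user_sum + beta_threshold * sqrt (D_qua T v)"
    if v_in: "v \<in> utilities T" for v
    using v_in sum_user_util_le by (auto simp: utilities_def)
  note fair = U_qua_fair_of_bound[OF fair_in fair_D fair_sum bound \<beta> u]
  show "\<forall>j<d + 1. snd u j = fair_exposure j"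
    using fair(1) quality_target unfolding D_qua_eq_0_iff T_simps by metis
  show "(\<Sum>i<N0 * (d + 1). fst u i) = fair_user_sum"
    using fair(2) unfolding T_simps .
qed

lemma welfare_maximizer_vecs:
  assumes "\<theta> \<in> Theta" "welfare_maximizer T \<theta> u"
  shows "users_vec T u = replicate (N0 * (d + 1)) 1" "items_vec T u = replicate (d + 1) (real N0)"
  using welfare_maximizer_T[OF assms]
  by (auto intro!: nth_equalityI simp: users_vec_def items_vec_def simp del: upt_Suc replicate_Suc)

lemma lorenz_gt_U_qua:
  assumes \<theta>: "\<theta> \<in> Theta" and u: "welfare_maximizer T \<theta> u"
    and \<beta>: "beta_threshold < \<beta>" and v: "v \<in> U_qua T \<beta>"
  shows "lorenz_gt (users_vec T u) (users_vec T v)" "lorenz_gt (items_vec T u) (items_vec T v)"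
proof -
  note vecs = welfare_maximizer_vecs[OF \<theta> u]
  note fair = U_qua_T[OF \<beta> v]
  show "lorenz_gt (users_vec T u) (users_vec T v)"
    unfolding vecs(1) using lorenz_gt_replicate_of_sum_less fair(2) fair_user_sum_less
    by (simp add: users_vec_def interv_sum_list_conv_sum_set_nat atLeast_upt)
  have "sum_list (items_vec T v) \<le> real (d + 1) * real N0"
    using fair(1) sum_fair_exposure
    by (simp add: items_vec_def interv_sum_list_conv_sum_set_nat atLeast_upt)
  moreover have "items_vec T v ! 1 < real N0"
    using fair(1) d N0 by (simp add: items_vec_def fair_exposure_def nth_append)
  ultimately show "lorenz_gt (items_vec T u) (items_vec T v)"
    unfolding vecs(2) using lorenz_gt_replicate_of_nth_less[of _ "d + 1" "real N0" 1] d
    by (simp add: items_vec_def)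
qed

lemma user_welfare_ratio_U_qua:
  assumes "\<theta> \<in> Theta" "welfare_maximizer T \<theta> u" "beta_threshold < \<beta>" "v \<in> U_qua T \<beta>"
  shows "(\<Sum>i<nusers T. fst v i) / (\<Sum>i<nusers T. fst u i) = 5 / 6 + 1 / (4 * real (d + 1))"
proof -
  have "(\<Sum>i<N0 * (d + 1). fst u i) = real (N0 * (d + 1))"
    using welfare_maximizer_T[OF assms(1,2)] by simp
  thus ?thesis using U_qua_T(2)[OF assms(3,4)] fair_user_sum_ratio by simp
qed

theorem welfare_vs_quality_weighted_exposure:
  assumes \<theta>: "\<theta> \<in> Theta" and u: "welfare_maximizer T \<theta> u"
    and uq: "\<forall>\<beta>>0. uq \<beta> \<in> U_qua T \<beta>"
  shows "\<exists>\<beta>>0. lorenz_gt (users_vec T u) (users_vec T (uq \<beta>)) \<and>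
      lorenz_gt (items_vec T u) (items_vec T (uq \<beta>))"
    and "((\<lambda>\<beta>. (\<Sum>i<nusers T. fst (uq \<beta>) i) / (\<Sum>i<nusers T. fst u i))
      \<longlongrightarrow> 5 / 6 + 1 / (4 * real (d + 1))) at_top"
proof -
  have threshold: "0 \<le> beta_threshold" by simp
  hence uq': "uq \<beta> \<in> U_qua T \<beta>" if "beta_threshold < \<beta>" for \<beta>
    using uq that by (meson order.strict_trans1)
  show "\<exists>\<beta>>0. lorenz_gt (users_vec T u) (users_vec T (uq \<beta>)) \<and>
      lorenz_gt (items_vec T u) (items_vec T (uq \<beta>))"
  proof (intro exI conjI)
    show "0 < beta_threshold + 1" using threshold by linarith
    show "lorenz_gt (users_vec T u) (users_vec T (uq (beta_threshold + 1)))"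
      "lorenz_gt (items_vec T u) (items_vec T (uq (beta_threshold + 1)))"
      using lorenz_gt_U_qua[OF \<theta> u _ uq'] by simp_all
  qed
  have "\<forall>\<^sub>F \<beta> in at_top. (\<Sum>i<nusers T. fst (uq \<beta>) i) / (\<Sum>i<nusers T. fst u i)
      = 5 / 6 + 1 / (4 * real (d + 1))"
    using eventually_gt_at_top[of beta_threshold]
    by eventually_elim (rule user_welfare_ratio_U_qua[OF \<theta> u _ uq'])
  thus "((\<lambda>\<beta>. (\<Sum>i<nusers T. fst (uq \<beta>) i) / (\<Sum>i<nusers T. fst u i))
      \<longlongrightarrow> 5 / 6 + 1 / (4 * real (d + 1))) at_top"
    by (rule tendsto_eventually)
qed

end

theorem proposition2:
  fixes N0 :: nat
  assumes "1 \<le> N0"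
  shows "\<exists>T :: nat \<Rightarrow> rec_problem.
    (\<forall>d \<ge> 1. valid_problem (T d) \<and> nitems (T d) = d + 1 \<and> nusers (T d) = N0 * (d + 1)) \<and>
    (\<forall>\<theta> \<in> Theta. \<exists>L :: nat \<Rightarrow> real. (L \<longlonglongrightarrow> 5 / 6) \<and>
       (\<forall>d \<ge> 1. \<forall>u\<theta> uq.
          welfare_maximizer (T d) \<theta> u\<theta> \<longrightarrow>
          (\<forall>\<beta> > 0. uq \<beta> \<in> U_qua (T d) \<beta>) \<longrightarrow>
          (\<exists>\<beta> > 0. lorenz_gt (users_vec (T d) u\<theta>) (users_vec (T d) (uq \<beta>)) \<and>
                    lorenz_gt (items_vec (T d) u\<theta>) (items_vec (T d) (uq \<beta>))) \<and>
          ((\<lambda>\<beta>. (\<Sum>i<nusers (T d). fst (uq \<beta>) i) / (\<Sum>i<nusers (T d). fst u\<theta> i))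
             \<longlongrightarrow> L d) at_top))"
proof (intro exI[of _ "example_problem N0"] exI[of _ "\<lambda>d. 5 / 6 + 1 / (4 * real (d + 1))"]
    conjI ballI allI impI)
  fix d :: nat assume "1 \<le> d"
  then interpret example N0 d using assms by unfold_locales
  show "valid_problem T" by (rule valid_T)
  show "nitems T = d + 1" "nusers T = N0 * (d + 1)" by simp_all
next
  have "(\<lambda>d. 5 / 6 + inverse (real (Suc d)) / 4) \<longlonglongrightarrow> 5 / 6 + 0 / 4"
    by (intro tendsto_intros LIMSEQ_inverse_real_of_nat) simp
  thus "(\<lambda>d. 5 / 6 + 1 / (4 * real (d + 1))) \<longlonglongrightarrow> 5 / 6"
    by (simp add: inverse_eq_divide mult.commute)
next
  fix \<theta> d u uq
  assume \<theta>: "\<theta> \<in> Theta" and d: "1 \<le> d" and u: "welfare_maximizer (example_problem N0 d) \<theta> u"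
    and uq: "\<forall>\<beta>>0. uq \<beta> \<in> U_qua (example_problem N0 d) \<beta>"
  interpret example N0 d using assms d by unfold_locales
  show "\<exists>\<beta>>0. lorenz_gt (users_vec T u) (users_vec T (uq \<beta>)) \<and>
      lorenz_gt (items_vec T u) (items_vec T (uq \<beta>))"
    by (rule welfare_vs_quality_weighted_exposure(1)[OF \<theta> u uq])
  show "((\<lambda>\<beta>. (\<Sum>i<nusers T. fst (uq \<beta>) i) / (\<Sum>i<nusers T. fst u i))
      \<longlongrightarrow> 5 / 6 + 1 / (4 * real (d + 1))) at_top"
    by (rule welfare_vs_quality_weighted_exposure(2)[OF \<theta> u uq])
qed

end
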